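(* For any loxodromic element $r\in\mathrm{Spin}(1,n)$ we have \[\ell(r)\ \geq\ 2\cosh^{-1}(|r_{\mathbb{R}}|).\]
   Context: Let $\tilde Q=y_0^2-y_1^2-\cdots-y_n^2$ on $E=\mathbb{R}^{n+1}$ with orthogonal basis $e_0,\dots,e_n$. The Clifford algebra $\mathscr{C}(\tilde Q,\mathbb{R})$ is the tensor algebra of $E$ modulo the relations $x\otimes y+y\otimes x=2\Phi(x,y)$ ($\Phi$ the bilinear form of $\tilde Q$); it has basis $e_M=e_{\mu_1}\cdots e_{\mu_\nu}$ for subsets $M=\{\mu_1<\dots<\mu_\nu\}$ (with $e_\emptyset=1$), and every $s$ is uniquely $s=s_{\mathbb{R}}\cdot 1+\sum_{M\neq\emptyset}s_Me_M$; $s_{\mathbb{R}}$ is the real part of $s$. The anti-involution $*$ is defined by $e_M^*=(-1)^{\nu(\nu-1)/2}e_M$, $\nu=|M|$. The even subalgebra $\mathscr{C}^+$ is spanned by $e_M$ with $|M|$ even, and $\mathrm{Spin}(1,n)=\{s\in\mathscr{C}^+ : sEs^*\subseteq E,\ ss^*=1\}$. Each $s\in \mathrm{Spin}(1,n)$ acts on hyperbolic $n$-space (the sheet with $y_0>0$ of $\{\tilde Q=1\}$, with the induced metric from $-\tilde Q$) by the orientation-preserving isometry $\varphi_s(x)=sxs^*$; $s$ is called loxodromic if $\varphi_s$ fixes exactly two points on the boundary at infinity, and $\ell(s)=\inf_x d(x,\varphi_s(x))$ is its translation length. *)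

theory Defs
  imports Complex_Main
begin

text \<open>Clifford algebra of Q = y0^2 - y1^2 - ... - yn^2 on R^(n+1), basis e_0..e_n.
  An element is represented by its coefficient function M \<mapsto> s_M on subsets
  M of {0..n}; coefficients outside Pow {0..n} are 0 for genuine elements.\<close>

type_synonym cl = "nat set \<Rightarrow> real"

text \<open>Sign in e_M e_N = blade_sign M N * e_(M symdiff N), for an orthogonal basis
  with e_0^2 = 1 and e_i^2 = -1 (i \<ge> 1).\<close>
definition blade_sign :: "nat set \<Rightarrow> nat set \<Rightarrow> real" where
  "blade_sign M N =
     (-1) ^ card {(i, j). i \<in> M \<and> j \<in> N \<and> j < i} * (-1) ^ card (M \<inter> N - {0})"

definition clmul :: "nat \<Rightarrow> cl \<Rightarrow> cl \<Rightarrow> cl" where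
  "clmul n s t = (\<lambda>K. \<Sum>M\<in>Pow {0..n}. \<Sum>N\<in>Pow {0..n}.
      if (M - N) \<union> (N - M) = K then s M * t N * blade_sign M N else 0)"

definition clone :: cl where
  "clone = (\<lambda>M. if M = {} then 1 else 0)"

definition clstar :: "cl \<Rightarrow> cl" where
  "clstar s = (\<lambda>M. (-1) ^ (card M * (card M - 1) div 2) * s M)"

definition re_part :: "cl \<Rightarrow> real" where
  "re_part s = s {}"

text \<open>Vectors of E = R^(n+1) are functions nat \<Rightarrow> real vanishing above n.\<close>
definition vec_cl :: "nat \<Rightarrow> (nat \<Rightarrow> real) \<Rightarrow> cl" where
  "vec_cl n x = (\<lambda>M. \<Sum>i\<le>n. if M = {i} then x i else 0)"

definition cl_vec :: "nat \<Rightarrow> cl \<Rightarrow> (nat \<Rightarrow> real)" where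
  "cl_vec n s = (\<lambda>i. if i \<le> n then s {i} else 0)"

definition in_E :: "nat \<Rightarrow> (nat \<Rightarrow> real) \<Rightarrow> bool" where
  "in_E n x \<longleftrightarrow> (\<forall>i>n. x i = 0)"

definition Ecl :: "nat \<Rightarrow> cl set" where
  "Ecl n = {t. \<forall>M. t M \<noteq> 0 \<longrightarrow> card M = 1 \<and> M \<subseteq> {0..n}}"

definition Spin :: "nat \<Rightarrow> cl set" where
  "Spin n = {s. (\<forall>M. \<not> M \<subseteq> {0..n} \<longrightarrow> s M = 0)
              \<and> (\<forall>M. odd (card M) \<longrightarrow> s M = 0)
              \<and> (\<forall>x. in_E n x \<longrightarrow> clmul n (clmul n s (vec_cl n x)) (clstar s) \<in> Ecl n)
              \<and> clmul n s (clstar s) = clone}"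

definition Phi :: "nat \<Rightarrow> (nat \<Rightarrow> real) \<Rightarrow> (nat \<Rightarrow> real) \<Rightarrow> real" where
  "Phi n x y = x 0 * y 0 - (\<Sum>i=1..n. x i * y i)"

definition act :: "nat \<Rightarrow> cl \<Rightarrow> (nat \<Rightarrow> real) \<Rightarrow> (nat \<Rightarrow> real)" where
  "act n s x = cl_vec n (clmul n (clmul n s (vec_cl n x)) (clstar s))"

definition Hyp :: "nat \<Rightarrow> (nat \<Rightarrow> real) set" where
  "Hyp n = {x. in_E n x \<and> x 0 > 0 \<and> Phi n x x = 1}"

definition hdist :: "nat \<Rightarrow> (nat \<Rightarrow> real) \<Rightarrow> (nat \<Rightarrow> real) \<Rightarrow> real" where
  "hdist n x y = arcosh (Phi n x y)"

text \<open>Boundary at infinity: future null rays, each represented by its unique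
  representative with v_0 = 1.\<close>
definition bdry :: "nat \<Rightarrow> (nat \<Rightarrow> real) set" where
  "bdry n = {v. in_E n v \<and> v 0 = 1 \<and> Phi n v v = 0}"

text \<open>Boundary points fixed by the (linear extension of) phi_s: s v s^* lies on the ray of v.\<close>
definition fixed_bdry :: "nat \<Rightarrow> cl \<Rightarrow> (nat \<Rightarrow> real) set" where
  "fixed_bdry n s = {v \<in> bdry n. \<exists>c>0. act n s v = (\<lambda>i. c * v i)}"

definition loxodromic :: "nat \<Rightarrow> cl \<Rightarrow> bool" where
  "loxodromic n s \<longleftrightarrow> finite (fixed_bdry n s) \<and> card (fixed_bdry n s) = 2"

definition transl_len :: "nat \<Rightarrow> cl \<Rightarrow> real" where
  "transl_len n s = (INF x\<in>Hyp n. hdist n x (act n s x))"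

end

(*
  For x in hyperbolic space with Clifford image X (so X X = 1), cosh d(x, r x r* ) is the real part
  of X r X r*. The rotor G = 1 + X e_0 satisfies G G* = G* G = k and G e_0 G* = k X, where
  k = 2 + 2 x_0. Hence w = G* r G gives k^2 cosh d = Re(e_0 w e_0 w* ) = sum_M w_M^2, whereas
  Re(w w* ) = sum_M (-1)^|M - {0}| w_M^2 = k^2 because r r* = 1, and Re w = k Re r.
  Adding the two sums leaves only nonnegative terms, among them 2 (Re w)^2, so
  cosh d >= 2 (Re r)^2 - 1 = cosh (2 arcosh |Re r|) at every point x.
*)

theory Submission
  imports Defs
begin

abbreviation symdiff :: "'a set \<Rightarrow> 'a set \<Rightarrow> 'a set" where
  "symdiff M N \<equiv> (M - N) \<union> (N - M)"

lemma symdiff_eq_iff: "symdiff M N = K \<longleftrightarrow> N = symdiff M K"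
  by auto

lemma symdiff_symdiff_left [simp]: "symdiff M (symdiff M A) = A"
  by auto

lemma symdiff_symdiff_right [simp]: "symdiff (symdiff K N) K = N"
  by auto

lemma neg_one_power_eq_if_even_add: "even (a + b) \<Longrightarrow> (-1::real) ^ a = (-1) ^ b"
  by (metis minus_one_power_iff even_add)

lemma neg_one_power_card_symdiff:
  assumes "finite A" "finite B"
  shows "(-1::real) ^ card (symdiff A B) = (-1) ^ card A * (-1) ^ card B"
proof -
  have "symdiff A B = A \<union> B - A \<inter> B"
    by auto
  then have "card (symdiff A B) = card (A \<union> B - A \<inter> B)"
    by simp
  also have "\<dots> = card (A \<union> B) - card (A \<inter> B)"
    using assms by (intro card_Diff_subset) auto
  finally have "card (symdiff A B) = card (A \<union> B) - card (A \<inter> B)" .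
  moreover have "card (A \<union> B) + card (A \<inter> B) = card A + card B"
    using assms by (rule card_Un_Int[symmetric])
  moreover have "card (A \<inter> B) \<le> card (A \<union> B)"
    using assms by (intro card_mono) auto
  ultimately have "card A + card B = card (symdiff A B) + 2 * card (A \<inter> B)"
    by linarith
  then have "(-1::real) ^ card A * (-1) ^ card B
      = (-1) ^ card (symdiff A B) * ((-1) ^ 2) ^ card (A \<inter> B)"
    by (metis power_add power_mult)
  then show ?thesis
    by simp
qed

definition inversions :: "nat set \<Rightarrow> nat set \<Rightarrow> (nat \<times> nat) set" where
  "inversions M N = {(i, j). i \<in> M \<and> j \<in> N \<and> j < i}"

lemma blade_sign_inversions:
  "blade_sign M N = (-1) ^ card (inversions M N) * (-1) ^ card (M \<inter> N - {0})"
  unfolding blade_sign_def inversions_def ..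

lemma finite_inversions: "finite M \<Longrightarrow> finite N \<Longrightarrow> finite (inversions M N)"
  unfolding inversions_def by (rule finite_subset[of _ "M \<times> N"]) auto

lemma card_inversions_swap:
  assumes "finite M" "finite N"
  shows "card (inversions M N) + card (inversions N M) + card (M \<inter> N) = card M * card N"
proof -
  let ?D = "(\<lambda>i. (i, i)) ` (M \<inter> N)"
  have fin: "finite (inversions M N)" "finite (prod.swap ` inversions N M)" "finite ?D"
    using assms by (simp_all add: finite_inversions)
  have "M \<times> N = inversions M N \<union> prod.swap ` inversions N M \<union> ?D"
    unfolding inversions_def by auto
  then have "card M * card N = card (inversions M N \<union> prod.swap ` inversions N M \<union> ?D)"
    by (metis card_cartesian_product)
  also have "\<dots> = card (inversions M N \<union> prod.swap ` inversions N M) + card ?D"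
    using fin by (intro card_Un_disjoint) (auto simp: inversions_def)
  also have "card (inversions M N \<union> prod.swap ` inversions N M)
      = card (inversions M N) + card (prod.swap ` inversions N M)"
    using fin by (intro card_Un_disjoint) (auto simp: inversions_def)
  also have "card (prod.swap ` inversions N M) = card (inversions N M)"
    by (rule card_image) (auto simp: inj_on_def)
  also have "card ?D = card (M \<inter> N)"
    by (rule card_image) (simp add: inj_on_def)
  finally show ?thesis ..
qed

lemma blade_sign_symdiff_left:
  assumes "finite M" "finite N" "finite K"
  shows "blade_sign (symdiff M N) K = blade_sign M K * blade_sign N K"
proof -
  have "inversions (symdiff M N) K = symdiff (inversions M K) (inversions N K)"
    unfolding inversions_def by auto
  moreover have "symdiff M N \<inter> K - {0} = symdiff (M \<inter> K - {0}) (N \<inter> K - {0})"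
    by auto
  ultimately show ?thesis
    using assms by (simp add: blade_sign_inversions neg_one_power_card_symdiff finite_inversions)
qed

lemma blade_sign_symdiff_right:
  assumes "finite M" "finite N" "finite K"
  shows "blade_sign M (symdiff N K) = blade_sign M N * blade_sign M K"
proof -
  have "inversions M (symdiff N K) = symdiff (inversions M N) (inversions M K)"
    unfolding inversions_def by auto
  moreover have "M \<inter> symdiff N K - {0} = symdiff (M \<inter> N - {0}) (M \<inter> K - {0})"
    by auto
  ultimately show ?thesis
    using assms by (simp add: blade_sign_inversions neg_one_power_card_symdiff finite_inversions)
qed

lemma blade_sign_cocycle:
  assumes "finite M" "finite N" "finite L"
  shows "blade_sign M N * blade_sign (symdiff M N) L = blade_sign N L * blade_sign M (symdiff N L)"
  using assms by (simp add: blade_sign_symdiff_left blade_sign_symdiff_right mult_ac)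

lemma blade_sign_empty_left [simp]: "blade_sign {} K = 1"
  and blade_sign_empty_right [simp]: "blade_sign K {} = 1"
  unfolding blade_sign_def by simp_all

lemma blade_sign_singleton:
  "blade_sign {i} {j} = (if j < i then -1 else 1) * (if i = j \<and> i \<noteq> 0 then -1 else 1)"
proof -
  have "inversions {i} {j} = (if j < i then {(i, j)} else {})"
    unfolding inversions_def by auto
  moreover have "{i} \<inter> {j} - {0} = (if i = j \<and> i \<noteq> 0 then {i} else {})"
    by auto
  ultimately show ?thesis
    unfolding blade_sign_inversions by auto
qed

lemma blade_sign_zero_left: "blade_sign {0} K = 1"
proof -
  have "inversions {0} K = {}" and "{0} \<inter> K - {0} = {}"
    unfolding inversions_def by auto
  then show ?thesis
    unfolding blade_sign_inversions by (simp only: card.empty power_0 mult_1)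
qed

lemma blade_sign_zero_right:
  assumes "finite K"
  shows "blade_sign (symdiff K {0}) {0} = (-1) ^ card (K - {0})"
proof -
  have "inversions (symdiff K {0}) {0} = (\<lambda>i. (i, 0)) ` (K - {0})"
    unfolding inversions_def by auto
  moreover have "card ((\<lambda>i. (i, 0::nat)) ` (K - {0})) = card (K - {0})"
    by (rule card_image) (auto simp: inj_on_def)
  moreover have "symdiff K {0} \<inter> {0} - {0} = {}"
    by auto
  ultimately show ?thesis
    unfolding blade_sign_inversions by (simp only: card.empty power_0 mult_1)
qed

definition reversion_sign :: "nat \<Rightarrow> real" where
  "reversion_sign p = (-1) ^ (p * (p - 1) div 2)"

lemma clstar_reversion_sign: "clstar s = (\<lambda>M. reversion_sign (card M) * s M)"
  unfolding clstar_def reversion_sign_def ..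

lemma reversion_sign_square [simp]: "reversion_sign p * reversion_sign p = 1"
  unfolding reversion_sign_def by (rule minus_one_mult_self)

lemma reversion_sign_Suc: "reversion_sign (Suc p) = reversion_sign p * (-1) ^ p"
proof -
  have "Suc p * p div 2 = p * (p - 1) div 2 + p"
    by (cases p) (simp_all add: algebra_simps)
  then show ?thesis
    unfolding reversion_sign_def by (simp add: power_add)
qed

lemma reversion_sign_add:
  "reversion_sign (a + b) = reversion_sign a * reversion_sign b * (-1) ^ (a * b)"
proof (induction b)
  case (Suc b)
  have "reversion_sign (a + Suc b) = reversion_sign (a + b) * (-1) ^ (a + b)"
    by (simp add: reversion_sign_Suc)
  also have "\<dots> = reversion_sign a * (reversion_sign b * (-1) ^ b) * (-1) ^ (a * Suc b)"
    using Suc by (simp add: power_add mult_ac)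
  finally show ?case
    by (simp add: reversion_sign_Suc)
qed (simp add: reversion_sign_def)

lemma blade_sign_self:
  assumes "finite M"
  shows "blade_sign M M * reversion_sign (card M) = (-1) ^ card (M - {0})"
proof -
  have "2 * card (inversions M M) + card M = card M * card M"
    using card_inversions_swap[OF assms assms] by simp
  then have "card (inversions M M) = card M * (card M - 1) div 2"
    by (cases "card M") (auto simp: algebra_simps)
  then show ?thesis
    unfolding blade_sign_inversions reversion_sign_def by (simp add: mult_ac)
qed

lemma blade_sign_square [simp]: "blade_sign M N * blade_sign M N = 1"
  unfolding blade_sign_def by (simp add: mult_ac)

lemma blade_sign_commute:
  assumes "finite M" "finite N"
  shows "blade_sign M N * blade_sign N M = (-1) ^ (card M * card N + card (M \<inter> N))"
proof -
  have "blade_sign M N * blade_sign N M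
      = (-1) ^ (card (inversions M N) + card (inversions N M)) * (-1) ^ (2 * card (M \<inter> N - {0}))"
    unfolding blade_sign_inversions by (simp add: power_add Int_commute mult_ac mult_2)
  also have "\<dots> = (-1) ^ (card M * card N + card (M \<inter> N))"
    using card_inversions_swap[OF assms]
    by (simp add: power_mult) (rule neg_one_power_eq_if_even_add, presburger)
  finally show ?thesis .
qed

lemma reversion_sign_symdiff:
  assumes "finite M" "finite N"
  shows "reversion_sign (card (symdiff M N))
    = reversion_sign (card M) * reversion_sign (card N) * (-1) ^ (card M * card N + card (M \<inter> N))"
proof -
  define m k c where "m = card (M - N)" and "k = card (N - M)" and "c = card (M \<inter> N)"
  have "card M = m + c" "card N = k + c"
    unfolding m_def k_def c_def using assms card_Int_Diff by (metis add.commute Int_commute)+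
  moreover have "card (symdiff M N) = m + k"
    unfolding m_def k_def using assms by (subst card_Un_disjoint) auto
  moreover have "(-1::real) ^ (m * k) = (-1) ^ (m * c + k * c + ((m + c) * (k + c) + c))"
    by (rule neg_one_power_eq_if_even_add) (simp add: algebra_simps)
  ultimately show ?thesis
    unfolding c_def[symmetric] by (simp add: reversion_sign_add power_add mult_ac)
qed

lemma blade_sign_reverse:
  assumes "finite M" "finite N"
  shows "reversion_sign (card (symdiff M N)) * blade_sign M N
    = reversion_sign (card M) * reversion_sign (card N) * blade_sign N M"
  unfolding reversion_sign_symdiff[OF assms] blade_sign_commute[OF assms, symmetric]
  by (simp add: mult_ac)

definition cl_elem :: "nat \<Rightarrow> cl \<Rightarrow> bool" where
  "cl_elem n s \<longleftrightarrow> (\<forall>M. \<not> M \<subseteq> {0..n} \<longrightarrow> s M = 0)"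

definition cl_add :: "cl \<Rightarrow> cl \<Rightarrow> cl" where
  "cl_add s t = (\<lambda>M. s M + t M)"

definition cl_scale :: "real \<Rightarrow> cl \<Rightarrow> cl" where
  "cl_scale c s = (\<lambda>M. c * s M)"

lemma cl_scale_one [simp]: "cl_scale 1 s = s"
  unfolding cl_scale_def by simp

lemma cl_elem_clone: "cl_elem n clone"
  unfolding cl_elem_def clone_def by auto

lemma cl_elem_vec_cl: "cl_elem n (vec_cl n x)"
  unfolding cl_elem_def vec_cl_def by (auto intro!: sum.neutral)

lemma cl_elem_cl_add: "cl_elem n s \<Longrightarrow> cl_elem n t \<Longrightarrow> cl_elem n (cl_add s t)"
  unfolding cl_elem_def cl_add_def by simp

lemma sum_Pow_reindex_symdiff:
  assumes "M \<subseteq> {0..n}"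
  shows "(\<Sum>L\<in>Pow {0..n}. f L) = (\<Sum>N\<in>Pow {0..n}. f (symdiff M N))"
  by (rule sum.reindex_bij_witness[of _ "symdiff M" "symdiff M"])
    (use assms in \<open>auto simp del: Un_iff\<close>)

context
  fixes n :: nat
begin

abbreviation clm :: "cl \<Rightarrow> cl \<Rightarrow> cl" (infixl "\<odot>" 70) where
  "s \<odot> t \<equiv> clmul n s t"

lemma clmul_coeff:
  "(s \<odot> t) K = (if K \<subseteq> {0..n} then
     (\<Sum>M\<in>Pow {0..n}. s M * t (symdiff M K) * blade_sign M (symdiff M K)) else 0)"
proof -
  have "(\<Sum>N\<in>Pow {0..n}. if symdiff M N = K then s M * t N * blade_sign M N else 0)
      = (if K \<subseteq> {0..n} then s M * t (symdiff M K) * blade_sign M (symdiff M K) else 0)"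
    if "M \<subseteq> {0..n}" for M
  proof -
    have "(\<Sum>N\<in>Pow {0..n}. if symdiff M N = K then s M * t N * blade_sign M N else 0)
      = (\<Sum>N\<in>Pow {0..n}. if N = symdiff M K then s M * t N * blade_sign M N else 0)"
      by (rule sum.cong) (auto simp only: symdiff_eq_iff)
    also have "\<dots> = (if K \<subseteq> {0..n} then s M * t (symdiff M K) * blade_sign M (symdiff M K) else 0)"
      using that by (auto simp: sum.delta)
    finally show ?thesis .
  qed
  then show ?thesis
    unfolding clmul_def by (auto intro: sum.neutral)
qed

lemma cl_elem_clmul: "cl_elem n (s \<odot> t)"
  unfolding cl_elem_def by (simp add: clmul_coeff)

lemma re_part_clmul: "re_part (s \<odot> t) = (\<Sum>M\<in>Pow {0..n}. s M * t M * blade_sign M M)"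
  by (simp add: re_part_def clmul_coeff)

lemma re_part_clmul_commute: "re_part (s \<odot> t) = re_part (t \<odot> s)"
  unfolding re_part_clmul by (simp add: mult_ac)

lemma clmul_assoc: "(a \<odot> b) \<odot> c = a \<odot> (b \<odot> c)"
proof
  fix K
  show "((a \<odot> b) \<odot> c) K = (a \<odot> (b \<odot> c)) K"
  proof (cases "K \<subseteq> {0..n}")
    case False
    then show ?thesis by (simp add: clmul_coeff)
  next
    case K: True
    let ?P = "Pow {0..n}"
    have "((a \<odot> b) \<odot> c) K = (\<Sum>L\<in>?P. \<Sum>M\<in>?P. a M * b (symdiff M L) * blade_sign M (symdiff M L)
        * c (symdiff L K) * blade_sign L (symdiff L K))"
      using K by (simp add: clmul_coeff sum_distrib_right)
    also have "\<dots> = (\<Sum>M\<in>?P. \<Sum>L\<in>?P. a M * b (symdiff M L) * blade_sign M (symdiff M L)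
        * c (symdiff L K) * blade_sign L (symdiff L K))"
      by (rule sum.swap)
    also have "\<dots> = (\<Sum>M\<in>?P. \<Sum>N\<in>?P. a M * b N * blade_sign M N
        * c (symdiff (symdiff M N) K) * blade_sign (symdiff M N) (symdiff (symdiff M N) K))"
      by (rule sum.cong[OF refl], subst sum_Pow_reindex_symdiff) (auto simp del: Un_iff)
    also have "\<dots> = (\<Sum>M\<in>?P. \<Sum>N\<in>?P. a M * b N * c (symdiff N (symdiff M K))
        * blade_sign N (symdiff N (symdiff M K)) * blade_sign M (symdiff M K))"
    proof (intro sum.cong refl)
      fix M N assume "M \<in> ?P" "N \<in> ?P"
      moreover define L where "L = symdiff N (symdiff M K)"
      ultimately have "finite M" "finite N" "finite L"
        using K by (auto intro: finite_subset[where B = "{0..n}"])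
      moreover have "symdiff (symdiff M N) K = L" and "symdiff M K = symdiff N L"
        unfolding L_def by auto
      ultimately show "a M * b N * blade_sign M N * c (symdiff (symdiff M N) K)
          * blade_sign (symdiff M N) (symdiff (symdiff M N) K)
          = a M * b N * c L * blade_sign N L * blade_sign M (symdiff M K)"
        using blade_sign_cocycle[of M N L] by (simp add: mult_ac)
    qed
    also have "\<dots> = (a \<odot> (b \<odot> c)) K"
      using K by (auto simp: clmul_coeff sum_distrib_left sum_distrib_right mult_ac intro!: sum.cong)
    finally show ?thesis .
  qed
qed

lemma clmul_add_left: "cl_add a b \<odot> c = cl_add (a \<odot> c) (b \<odot> c)"
  by (rule ext) (simp add: clmul_coeff cl_add_def algebra_simps sum.distrib)

lemma clmul_add_right: "a \<odot> cl_add b c = cl_add (a \<odot> b) (a \<odot> c)"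
  by (rule ext) (simp add: clmul_coeff cl_add_def algebra_simps sum.distrib)

lemma clmul_scale_left: "cl_scale k a \<odot> b = cl_scale k (a \<odot> b)"
  by (rule ext) (simp add: clmul_coeff cl_scale_def sum_distrib_left mult_ac)

lemma clmul_scale_right: "a \<odot> cl_scale k b = cl_scale k (a \<odot> b)"
  by (rule ext) (simp add: clmul_coeff cl_scale_def sum_distrib_left mult_ac)

lemma clmul_clone_left: "cl_elem n s \<Longrightarrow> clone \<odot> s = s"
proof (rule ext)
  fix K assume s: "cl_elem n s"
  have "(\<Sum>M\<in>Pow {0..n}. clone M * s (symdiff M K) * blade_sign M (symdiff M K))
      = (\<Sum>M\<in>Pow {0..n}. if M = {} then s K else 0)"
    by (rule sum.cong) (auto simp: clone_def)
  then show "(clone \<odot> s) K = s K"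
    using s by (simp add: clmul_coeff cl_elem_def sum.delta)
qed

lemma clmul_clone_right: "cl_elem n s \<Longrightarrow> s \<odot> clone = s"
proof (rule ext)
  fix K assume s: "cl_elem n s"
  have "(\<Sum>M\<in>Pow {0..n}. s M * clone (symdiff M K) * blade_sign M (symdiff M K))
      = (\<Sum>M\<in>Pow {0..n}. if M = K then s K else 0)"
    by (rule sum.cong) (auto simp: clone_def)
  then show "(s \<odot> clone) K = s K"
    using s by (simp add: clmul_coeff cl_elem_def sum.delta')
qed

lemma clstar_add: "clstar (cl_add a b) = cl_add (clstar a) (clstar b)"
  unfolding clstar_def cl_add_def by (simp add: algebra_simps)

lemma clstar_clone: "clstar clone = clone"
  unfolding clstar_def clone_def by auto

lemma clstar_vec_cl: "clstar (vec_cl n x) = vec_cl n x"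
proof (rule ext)
  fix M
  have "vec_cl n x M = 0" if "card M \<noteq> 1"
    using that unfolding vec_cl_def by (auto intro!: sum.neutral)
  then show "clstar (vec_cl n x) M = vec_cl n x M"
    unfolding clstar_def by (cases "card M = 1") auto
qed

lemma clstar_clmul: "clstar (s \<odot> t) = clstar t \<odot> clstar s"
proof (rule ext)
  fix K
  show "clstar (s \<odot> t) K = (clstar t \<odot> clstar s) K"
  proof (cases "K \<subseteq> {0..n}")
    case False
    then show ?thesis by (simp add: clstar_reversion_sign clmul_coeff)
  next
    case K: True
    let ?P = "Pow {0..n}"
    have "(clstar t \<odot> clstar s) K = (\<Sum>N\<in>?P. reversion_sign (card N) * t N
        * (reversion_sign (card (symdiff N K)) * s (symdiff N K)) * blade_sign N (symdiff N K))"
      using K by (simp add: clmul_coeff clstar_reversion_sign)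
    also have "\<dots> = (\<Sum>M\<in>?P. reversion_sign (card (symdiff K M)) * t (symdiff K M)
        * (reversion_sign (card M) * s M) * blade_sign (symdiff K M) M)"
      by (subst sum_Pow_reindex_symdiff[OF K]) simp
    also have "\<dots> = (\<Sum>M\<in>?P. reversion_sign (card K) * (s M * t (symdiff M K) * blade_sign M (symdiff M K)))"
    proof (rule sum.cong[OF refl])
      fix M assume "M \<in> ?P"
      then have fin: "finite M" "finite (symdiff M K)"
        using K by (auto intro: finite_subset[where B = "{0..n}"])
      have "reversion_sign (card K) * blade_sign M (symdiff M K)
          = reversion_sign (card M) * reversion_sign (card (symdiff M K)) * blade_sign (symdiff M K) M"
        using blade_sign_reverse[OF fin] by simp
      then show "reversion_sign (card (symdiff K M)) * t (symdiff K M) * (reversion_sign (card M) * s M)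
          * blade_sign (symdiff K M) M
          = reversion_sign (card K) * (s M * t (symdiff M K) * blade_sign M (symdiff M K))"
        by (simp add: Un_commute mult_ac)
    qed
    also have "\<dots> = clstar (s \<odot> t) K"
      using K by (simp add: clmul_coeff clstar_reversion_sign sum_distrib_left)
    finally show ?thesis by simp
  qed
qed

lemma clstar_clstar [simp]: "clstar (clstar s) = s"
  unfolding clstar_reversion_sign by (simp add: mult.assoc[symmetric])

lemma sum_Pow_vec_cl: "(\<Sum>M\<in>Pow {0..n}. vec_cl n x M * f M) = (\<Sum>i\<le>n. x i * f {i})"
proof -
  have "(\<Sum>M\<in>Pow {0..n}. vec_cl n x M * f M)
      = (\<Sum>M\<in>Pow {0..n}. \<Sum>i\<le>n. if M = {i} then x i * f M else 0)"
    unfolding vec_cl_def sum_distrib_right by (intro sum.cong refl) auto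
  also have "\<dots> = (\<Sum>i\<le>n. \<Sum>M\<in>Pow {0..n}. if M = {i} then x i * f M else 0)"
    by (rule sum.swap)
  also have "\<dots> = (\<Sum>i\<le>n. x i * f {i})"
    by (intro sum.cong refl) (simp add: sum.delta)
  finally show ?thesis .
qed

lemma Phi_eq_sum_blade_sign: "Phi n x y = (\<Sum>i\<le>n. x i * y i * blade_sign {i} {i})"
proof -
  have "{..n} = insert 0 {1..n}"
    by auto
  then show ?thesis
    by (simp add: Phi_def blade_sign_singleton sum_negf)
qed

lemma clmul_vec_cl_vec_cl:
  "(vec_cl n x \<odot> vec_cl n y) K
   = (\<Sum>i\<le>n. \<Sum>j\<le>n. x i * y j * (if symdiff {i} {j} = K then blade_sign {i} {j} else 0))"
proof -
  have "(vec_cl n x \<odot> vec_cl n y) K = (\<Sum>M\<in>Pow {0..n}. vec_cl n x M *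
      (\<Sum>N\<in>Pow {0..n}. vec_cl n y N * (if symdiff M N = K then blade_sign M N else 0)))"
    unfolding clmul_def sum_distrib_left by (intro sum.cong refl) auto
  also have "\<dots> = (\<Sum>i\<le>n. x i * (\<Sum>j\<le>n. y j * (if symdiff {i} {j} = K then blade_sign {i} {j} else 0)))"
    by (simp only: sum_Pow_vec_cl)
  finally show ?thesis
    by (simp add: sum_distrib_left mult_ac)
qed

lemma vec_cl_anticommute:
  "cl_add (vec_cl n x \<odot> vec_cl n y) (vec_cl n y \<odot> vec_cl n x) = cl_scale (2 * Phi n x y) clone"
proof
  fix K
  have pair: "x i * y j * (if symdiff {i} {j} = K then blade_sign {i} {j} else 0)
      + y j * x i * (if symdiff {j} {i} = K then blade_sign {j} {i} else 0)
      = (if j = i \<and> K = {} then 2 * (x i * y i * blade_sign {i} {i}) else 0)" for i j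
  proof (cases "i = j")
    case False
    then have "blade_sign {j} {i} = - blade_sign {i} {j}"
      by (auto simp: blade_sign_singleton)
    then show ?thesis
      using False by (auto simp: insert_commute)
  qed auto
  have "cl_add (vec_cl n x \<odot> vec_cl n y) (vec_cl n y \<odot> vec_cl n x) K
      = (\<Sum>i\<le>n. \<Sum>j\<le>n. x i * y j * (if symdiff {i} {j} = K then blade_sign {i} {j} else 0))
      + (\<Sum>i\<le>n. \<Sum>j\<le>n. y j * x i * (if symdiff {j} {i} = K then blade_sign {j} {i} else 0))"
    unfolding cl_add_def clmul_vec_cl_vec_cl by (subst (2) sum.swap) simp
  also have "\<dots> = (\<Sum>i\<le>n. \<Sum>j\<le>n. if j = i \<and> K = {} then 2 * (x i * y i * blade_sign {i} {i}) else 0)"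
    by (simp only: sum.distrib[symmetric] pair)
  also have "\<dots> = cl_scale (2 * Phi n x y) clone K"
    by (simp add: Phi_eq_sum_blade_sign sum_distrib_left cl_scale_def clone_def)
  finally show "cl_add (vec_cl n x \<odot> vec_cl n y) (vec_cl n y \<odot> vec_cl n x) K
      = cl_scale (2 * Phi n x y) clone K" .
qed

lemma vec_cl_square: "vec_cl n x \<odot> vec_cl n x = cl_scale (Phi n x x) clone"
  using fun_cong[OF vec_cl_anticommute[of x x]] by (auto simp: cl_add_def cl_scale_def)

lemma re_part_vec_cl_clmul: "re_part (vec_cl n x \<odot> z) = Phi n x (cl_vec n z)"
proof -
  have "re_part (vec_cl n x \<odot> z) = (\<Sum>M\<in>Pow {0..n}. vec_cl n x M * (z M * blade_sign M M))"
    by (simp add: re_part_clmul mult.assoc)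
  also have "\<dots> = (\<Sum>i\<le>n. x i * cl_vec n z i * blade_sign {i} {i})"
    unfolding sum_Pow_vec_cl by (simp add: cl_vec_def mult.assoc)
  finally show ?thesis
    by (simp add: Phi_eq_sum_blade_sign)
qed

lemma Phi_act: "Phi n x (act n s x) = re_part (vec_cl n x \<odot> s \<odot> vec_cl n x \<odot> clstar s)"
  unfolding act_def re_part_vec_cl_clmul[symmetric] by (simp add: clmul_assoc)

definition e0 :: "nat \<Rightarrow> real" where
  "e0 = (\<lambda>i. if i = 0 then 1 else 0)"

lemma Phi_e0_left: "Phi n e0 x = x 0"
  unfolding Phi_def e0_def by simp

lemma Phi_e0_e0: "Phi n e0 e0 = 1"
  unfolding Phi_e0_left by (simp add: e0_def)

lemma e0_in_Hyp: "e0 \<in> Hyp n"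
  unfolding Hyp_def in_E_def by (simp add: Phi_e0_e0) (simp add: e0_def)

lemma sum_e0: "(\<Sum>i\<le>n. e0 i * f i) = f 0"
proof -
  have "(\<Sum>i\<le>n. e0 i * f i) = (\<Sum>i\<le>n. if i = 0 then f i else 0)"
    by (rule sum.cong) (auto simp: e0_def)
  then show ?thesis
    by (simp add: sum.delta)
qed

lemma clmul_e0_left:
  "K \<subseteq> {0..n} \<Longrightarrow> (vec_cl n e0 \<odot> w) K = w (symdiff {0} K)"
  by (simp add: clmul_coeff mult.assoc sum_Pow_vec_cl sum_e0 blade_sign_zero_left)

lemma clmul_e0_right:
  assumes "K \<subseteq> {0..n}"
  shows "(v \<odot> vec_cl n e0) K = v (symdiff K {0}) * blade_sign (symdiff K {0}) {0}"
proof -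
  have "(v \<odot> vec_cl n e0) K
      = (\<Sum>M\<in>Pow {0..n}. v M * vec_cl n e0 (symdiff M K) * blade_sign M (symdiff M K))"
    using assms by (simp add: clmul_coeff)
  also have "\<dots> = (\<Sum>N\<in>Pow {0..n}. vec_cl n e0 N * (v (symdiff K N) * blade_sign (symdiff K N) N))"
    by (subst sum_Pow_reindex_symdiff[OF assms]) (simp add: mult_ac)
  finally show ?thesis
    by (simp add: sum_Pow_vec_cl sum_e0)
qed

lemma e0_conj_coeff:
  assumes "K \<subseteq> {0..n}"
  shows "(vec_cl n e0 \<odot> w \<odot> vec_cl n e0) K = (-1) ^ card (K - {0}) * w K"
proof -
  have "finite K" "symdiff K {0} \<subseteq> {0..n}" and "symdiff {0} (symdiff K {0}) = K"
    using assms finite_subset by auto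
  then show ?thesis
    using assms by (simp add: clmul_e0_right clmul_e0_left blade_sign_zero_right)
qed

lemma re_part_e0_conj_clmul_clstar:
  "re_part (vec_cl n e0 \<odot> w \<odot> vec_cl n e0 \<odot> clstar w) = (\<Sum>M\<in>Pow {0..n}. (w M)\<^sup>2)"
  unfolding re_part_clmul
proof (rule sum.cong[OF refl])
  fix K assume "K \<in> Pow {0..n}"
  then have "finite K" "K \<subseteq> {0..n}"
    using finite_subset by auto
  then have "(vec_cl n e0 \<odot> w \<odot> vec_cl n e0) K * clstar w K * blade_sign K K
      = (w K)\<^sup>2 * ((-1) ^ card (K - {0}) * (blade_sign K K * reversion_sign (card K)))"
    by (simp add: e0_conj_coeff clstar_reversion_sign power2_eq_square mult_ac)
  then show "(vec_cl n e0 \<odot> w \<odot> vec_cl n e0) K * clstar w K * blade_sign K K = (w K)\<^sup>2"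
    using \<open>finite K\<close> by (simp add: blade_sign_self minus_one_mult_self)
qed

lemma re_part_clmul_clstar:
  "re_part (w \<odot> clstar w) = (\<Sum>M\<in>Pow {0..n}. (w M)\<^sup>2 * (-1) ^ card (M - {0}))"
  unfolding re_part_clmul
proof (rule sum.cong[OF refl])
  fix K assume "K \<in> Pow {0..n}"
  then have "finite K"
    using finite_subset by auto
  then show "w K * clstar w K * blade_sign K K = (w K)\<^sup>2 * (-1) ^ card (K - {0})"
    using blade_sign_self[of K] by (simp add: clstar_reversion_sign power2_eq_square mult_ac)
qed

lemma re_part_square_le:
  "2 * (re_part w)\<^sup>2 \<le> re_part (vec_cl n e0 \<odot> w \<odot> vec_cl n e0 \<odot> clstar w) + re_part (w \<odot> clstar w)"
proof -
  define f where "f M = (w M)\<^sup>2 * (1 + (-1) ^ card (M - {0}))" for M :: "nat set"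
  have "f {} \<le> sum f (Pow {0..n})"
  proof (rule member_le_sum)
    fix M :: "nat set"
    have "(-1::real) ^ card (M - {0}) \<ge> -1"
      by (cases "even (card (M - {0}))") auto
    then show "0 \<le> f M"
      unfolding f_def by simp
  qed auto
  then show ?thesis
    unfolding re_part_e0_conj_clmul_clstar re_part_clmul_clstar
    by (simp add: f_def re_part_def algebra_simps sum.distrib)
qed

lemma re_part_cl_scale: "re_part (cl_scale c s) = c * re_part s"
  unfolding re_part_def cl_scale_def ..

lemma re_part_clone: "re_part clone = 1"
  unfolding re_part_def clone_def by simp

definition rotor :: "(nat \<Rightarrow> real) \<Rightarrow> cl" where
  "rotor x = cl_add clone (vec_cl n x \<odot> vec_cl n e0)"

lemma cl_elem_rotor: "cl_elem n (rotor x)"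
  unfolding rotor_def by (simp add: cl_elem_cl_add cl_elem_clone cl_elem_clmul)

lemma clstar_rotor: "clstar (rotor x) = cl_add clone (vec_cl n e0 \<odot> vec_cl n x)"
  unfolding rotor_def by (simp add: clstar_add clstar_clone clstar_clmul clstar_vec_cl)

context
  fixes x :: "nat \<Rightarrow> real"
  assumes unit: "Phi n x x = 1"
begin

private lemma cancel_vec_cl:
  "cl_elem n z \<Longrightarrow> vec_cl n x \<odot> (vec_cl n x \<odot> z) = z"
  "cl_elem n z \<Longrightarrow> vec_cl n e0 \<odot> (vec_cl n e0 \<odot> z) = z"
  using unit by (simp_all add: clmul_assoc[symmetric] vec_cl_square Phi_e0_e0 clmul_clone_left)

private lemma anticommute_e0:
  "(vec_cl n e0 \<odot> vec_cl n x) K = 2 * x 0 * clone K - (vec_cl n x \<odot> vec_cl n e0) K"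
  using fun_cong[OF vec_cl_anticommute[of e0 x], of K]
  by (simp add: cl_add_def cl_scale_def Phi_e0_left)

private lemma sandwich_e0:
  "(vec_cl n x \<odot> (vec_cl n e0 \<odot> vec_cl n x)) K = 2 * x 0 * vec_cl n x K - vec_cl n e0 K"
proof -
  have "cl_add (vec_cl n x \<odot> (vec_cl n e0 \<odot> vec_cl n x)) (vec_cl n e0)
      = vec_cl n x \<odot> cl_add (vec_cl n e0 \<odot> vec_cl n x) (vec_cl n x \<odot> vec_cl n e0)"
    by (simp add: clmul_add_right cancel_vec_cl cl_elem_vec_cl)
  also have "\<dots> = cl_scale (2 * x 0) (vec_cl n x)"
    by (simp add: vec_cl_anticommute Phi_e0_left clmul_scale_right clmul_clone_right cl_elem_vec_cl)
  finally show ?thesis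
    by (simp add: fun_eq_iff cl_add_def cl_scale_def algebra_simps)
qed

private lemmas rotor_expand = clmul_add_left clmul_add_right clmul_assoc clmul_clone_left
  clmul_clone_right cl_elem_clone cl_elem_clmul cl_elem_vec_cl cancel_vec_cl unit vec_cl_square
  Phi_e0_e0

private lemmas rotor_collect = cl_add_def cl_scale_def anticommute_e0 sandwich_e0 algebra_simps

lemma rotor_clmul_clstar: "rotor x \<odot> clstar (rotor x) = cl_scale (2 + 2 * x 0) clone"
  unfolding clstar_rotor unfolding rotor_def
  by (intro ext) (simp add: rotor_expand, simp add: rotor_collect)

lemma clstar_rotor_clmul: "clstar (rotor x) \<odot> rotor x = cl_scale (2 + 2 * x 0) clone"
  unfolding clstar_rotor unfolding rotor_def
  by (intro ext) (simp add: rotor_expand, simp add: rotor_collect)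

lemma rotor_conj_e0: "rotor x \<odot> vec_cl n e0 \<odot> clstar (rotor x) = cl_scale (2 + 2 * x 0) (vec_cl n x)"
  unfolding clstar_rotor unfolding rotor_def
  by (intro ext) (simp add: rotor_expand, simp add: rotor_collect)

lemma rotor_cancel: "cl_elem n z \<Longrightarrow> rotor x \<odot> (clstar (rotor x) \<odot> z) = cl_scale (2 + 2 * x 0) z"
  by (simp add: clmul_assoc[symmetric] rotor_clmul_clstar clmul_scale_left clmul_clone_left)

lemma Phi_act_rotor_transport:
  fixes s :: cl
  defines "w \<equiv> clstar (rotor x) \<odot> s \<odot> rotor x"
  shows "(2 + 2 * x 0)\<^sup>2 * Phi n x (act n s x) = re_part (vec_cl n e0 \<odot> w \<odot> vec_cl n e0 \<odot> clstar w)"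
proof -
  let ?G = "rotor x" and ?E = "vec_cl n e0" and ?k = "2 + 2 * x 0"
  have "?k\<^sup>2 * Phi n x (act n s x)
      = re_part (cl_scale ?k (vec_cl n x) \<odot> s \<odot> cl_scale ?k (vec_cl n x) \<odot> clstar s)"
    by (simp add: Phi_act clmul_scale_left clmul_scale_right re_part_cl_scale power2_eq_square)
  also have "\<dots> = re_part (?G \<odot> (?E \<odot> (clstar ?G \<odot> (s \<odot> (?G \<odot> (?E \<odot> (clstar ?G \<odot> clstar s)))))))"
    by (simp flip: rotor_conj_e0 add: clmul_assoc)
  also have "\<dots> = re_part (?E \<odot> (clstar ?G \<odot> (s \<odot> (?G \<odot> (?E \<odot> (clstar ?G \<odot> clstar s))))) \<odot> ?G)"
    by (rule re_part_clmul_commute)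
  also have "\<dots> = re_part (?E \<odot> w \<odot> ?E \<odot> clstar w)"
    by (simp add: w_def clstar_clmul clmul_assoc)
  finally show ?thesis .
qed

lemma re_part_rotor_transport:
  "cl_elem n s \<Longrightarrow> re_part (clstar (rotor x) \<odot> s \<odot> rotor x) = (2 + 2 * x 0) * re_part s"
  by (subst re_part_clmul_commute) (simp add: rotor_cancel re_part_cl_scale)

lemma rotor_transport_clmul_clstar:
  fixes s :: cl
  assumes "cl_elem n s" and "s \<odot> clstar s = clone"
  defines "w \<equiv> clstar (rotor x) \<odot> s \<odot> rotor x"
  shows "re_part (w \<odot> clstar w) = (2 + 2 * x 0)\<^sup>2"
proof -
  have cancel_s: "s \<odot> (clstar s \<odot> z) = z" if "cl_elem n z" for z
    using that by (simp add: clmul_assoc[symmetric] assms(2) clmul_clone_left)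
  have "w \<odot> clstar w = cl_scale (2 + 2 * x 0) (cl_scale (2 + 2 * x 0) clone)"
    using assms(1) by (simp add: w_def clstar_clmul clmul_assoc rotor_cancel cancel_s cl_elem_clmul
        cl_elem_rotor clstar_rotor_clmul clmul_scale_right)
  then show ?thesis
    by (simp add: re_part_cl_scale re_part_clone power2_eq_square)
qed

end

lemma Phi_act_ge:
  assumes r: "cl_elem n r" "r \<odot> clstar r = clone" and x: "x \<in> Hyp n"
  shows "2 * (re_part r)\<^sup>2 - 1 \<le> Phi n x (act n r x)"
proof -
  have unit: "Phi n x x = 1" and "x 0 > 0"
    using x by (auto simp: Hyp_def)
  define k where "k = 2 + 2 * x 0"
  have "k\<^sup>2 * (2 * (re_part r)\<^sup>2) \<le> k\<^sup>2 * (Phi n x (act n r x) + 1)"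
    using re_part_square_le[of "clstar (rotor x) \<odot> r \<odot> rotor x"]
      Phi_act_rotor_transport[OF unit, of r] re_part_rotor_transport[OF unit r(1)]
      rotor_transport_clmul_clstar[OF unit r]
    unfolding k_def by (simp add: power2_eq_square algebra_simps)
  moreover have "k\<^sup>2 > 0"
    unfolding k_def using \<open>x 0 > 0\<close> by simp
  ultimately show ?thesis
    by (simp add: mult_le_cancel_left_pos)
qed

end

lemma arcosh_double:
  assumes "(1::real) \<le> a"
  shows "arcosh (2 * a\<^sup>2 - 1) = 2 * arcosh a"
proof -
  have "cosh (2 * arcosh a) = 2 * a\<^sup>2 - 1"
    using assms by (simp add: cosh_double_cosh)
  moreover have "2 * arcosh a \<ge> 0"
    using assms by simp
  ultimately show ?thesis
    using arcosh_cosh_real by metis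
qed

theorem proposition3p1:
  fixes n :: nat and r :: cl
  assumes "r \<in> Spin n" and "loxodromic n r"
  shows "1 \<le> \<bar>re_part r\<bar> \<longrightarrow> transl_len n r \<ge> 2 * arcosh \<bar>re_part r\<bar>"
proof
  assume "1 \<le> \<bar>re_part r\<bar>"
  have r: "cl_elem n r" "clmul n r (clstar r) = clone"
    using assms(1) unfolding Spin_def cl_elem_def by auto
  show "transl_len n r \<ge> 2 * arcosh \<bar>re_part r\<bar>"
    unfolding transl_len_def
  proof (rule cINF_greatest)
    fix x assume "x \<in> Hyp n"
    have "1 \<le> 2 * \<bar>re_part r\<bar>\<^sup>2 - 1"
      using power_mono[OF \<open>1 \<le> \<bar>re_part r\<bar>\<close>, of 2] by simp
    moreover have "2 * \<bar>re_part r\<bar>\<^sup>2 - 1 \<le> Phi n x (act n r x)"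
      using Phi_act_ge[OF r \<open>x \<in> Hyp n\<close>] by simp
    ultimately have "arcosh (2 * \<bar>re_part r\<bar>\<^sup>2 - 1) \<le> arcosh (Phi n x (act n r x))"
      by (metis arcosh_less_iff_real not_le order_trans)
    then show "2 * arcosh \<bar>re_part r\<bar> \<le> hdist n x (act n r x)"
      unfolding hdist_def arcosh_double[OF \<open>1 \<le> \<bar>re_part r\<bar>\<close>] .
  qed (use e0_in_Hyp in blast)
qed

end
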